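(* Let $\mathcal B$ be a deformable family over $F_K$ (notation as in the context), with limit $\mathcal B_\infty$ and limit map $\phi:\mathcal B\to\mathcal B_\infty$. Let $U=\{\alpha_i\mid i\in I\}$ be a strong generating set for $\mathcal B_\infty$ and $T=\{a_i\mid i\in I\}\subset\mathcal B$ elements with $\phi(a_i)=\alpha_i$. Then there is a subset $S\subset\mathbb C$ with $K\subset S$ which is at most countable, such that $F_S\otimes_{F_K}\mathcal B$ is strongly generated (as a vertex algebra over $F_S$) by $\{1\otimes a_i\mid i\in I\}$.
   Context: Let $K\subset\mathbb C$ be at most countable and let $F_K$ be the $\mathbb C$-algebra of rational functions $p(\kappa)/q(\kappa)$ in a formal variable $\kappa$ with $\deg p\le\deg q$ and all roots of $q$ in $K$ (so every element has a finite limit as $\kappa\to\infty$). A deformable family is a free $F_K$-module $\mathcal B$ with a vertex algebra structure over $F_K$, graded by conformal weight $\mathcal B=\bigoplus_{m\ge0}\mathcal B[m]$ with each $\mathcal B[m]$ free of finite rank. Choosing an $F_K$-basis $\{a_i\}$ of $\mathcal B$ (homogeneous in weight), the limit $\mathcal B_\infty$ is the vertex algebra over $\mathbb C$ with basis $\{\alpha_i\}$ and products $\alpha_i\circ_n\alpha_j=\lim_{\kappa\to\infty}a_i\circ_na_j$ (i.e. if $a_i\circ_na_j=\sum_lc_l(\kappa)a_l$ then $\alpha_i\circ_n\alpha_j=\sum_lc_l(\infty)\alpha_l$); the $F_K$-linear map $\phi:\mathcal B\to\mathcal B_\infty$, $a_i\mapsto\alpha_i$ (with $\phi(f a)=f(\infty)\phi(a)$)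 preserves all circle products. A set strongly generates a vertex algebra if the algebra is spanned (over the coefficient ring) by $1$ and normally ordered monomials in elements of the set and their derivatives. *)

theory Defs
  imports Complex_Main "HOL-Computational_Algebra.Polynomial" "HOL-Computational_Algebra.Fraction_Field" "HOL-Library.Countable_Set"
begin

text \<open>Rational functions in the formal variable kappa: the fraction field of complex polynomials.\<close>
type_synonym ratfun = "complex poly fract"

definition FK :: "complex set \<Rightarrow> ratfun set" where
  "FK K = {f. \<exists>p q. q \<noteq> 0 \<and> degree p \<le> degree q \<and> (\<forall>z. poly q z = 0 \<longrightarrow> z \<in> K)
                   \<and> f = Fract p q}"

definition lim_inf :: "ratfun \<Rightarrow> complex" where
  "lim_inf f = (THE c. \<exists>p q. q \<noteq> 0 \<and> f = Fract p q \<and>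
                    ((\<lambda>z. poly p z / poly q z) \<longlongrightarrow> c) at_infinity)"

text \<open>Free module with basis indexed by 'b: finitely supported coordinate vectors with
  coefficients in R.\<close>
definition vec :: "'f::comm_ring_1 set \<Rightarrow> ('b \<Rightarrow> 'f) \<Rightarrow> bool" where
  "vec R x \<longleftrightarrow> finite {l. x l \<noteq> 0} \<and> (\<forall>l. x l \<in> R)"

text \<open>Circle products from structure constants: c n i j l is the coefficient of the l-th
  basis vector in (i-th basis vector) o_n (j-th basis vector); extended bilinearly.\<close>
definition vprod :: "(int \<Rightarrow> 'b \<Rightarrow> 'b \<Rightarrow> 'b \<Rightarrow> 'f::comm_ring_1) \<Rightarrow> int
                      \<Rightarrow> ('b \<Rightarrow> 'f) \<Rightarrow> ('b \<Rightarrow> 'f) \<Rightarrow> ('b \<Rightarrow> 'f)" where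
  "vprod c n x y = (\<lambda>l. \<Sum>i\<in>{i. x i \<noteq> 0}. \<Sum>j\<in>{j. y j \<noteq> 0}. x i * y j * c n i j l)"

definition vderiv :: "(int \<Rightarrow> 'b \<Rightarrow> 'b \<Rightarrow> 'b \<Rightarrow> 'f::comm_ring_1) \<Rightarrow> ('b \<Rightarrow> 'f)
                      \<Rightarrow> ('b \<Rightarrow> 'f) \<Rightarrow> ('b \<Rightarrow> 'f)" where
  "vderiv c vac x = vprod c (-2) x vac"

definition ibinom :: "int \<Rightarrow> nat \<Rightarrow> int" where
  "ibinom p j = (\<Prod>i<j. p - int i) div fact j"

definition sgn_pow :: "int \<Rightarrow> 'f::comm_ring_1" where
  "sgn_pow r = (if even r then 1 else -1)"

text \<open>Vertex algebra over the coefficient ring R (a subring of the field 'f), given by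
  structure constants c and vacuum vac: truncation, vacuum axioms and Borcherds identity.\<close>
definition is_VA :: "'f::comm_ring_1 set \<Rightarrow> (int \<Rightarrow> 'b \<Rightarrow> 'b \<Rightarrow> 'b \<Rightarrow> 'f) \<Rightarrow> ('b \<Rightarrow> 'f) \<Rightarrow> bool" where
  "is_VA R c vac \<longleftrightarrow>
     vec R vac \<and> (\<forall>n i j l. c n i j l \<in> R) \<and>
     (\<forall>x y. vec R x \<longrightarrow> vec R y \<longrightarrow> (\<exists>N. \<forall>n\<ge>N. vprod c n x y = (\<lambda>_. 0))) \<and>
     (\<forall>x n. vec R x \<longrightarrow> vprod c n vac x = (if n = -1 then x else (\<lambda>_. 0))) \<and>
     (\<forall>x. vec R x \<longrightarrow> vprod c (-1) x vac = x \<and> (\<forall>n\<ge>0. vprod c n x vac = (\<lambda>_. 0))) \<and>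
     (\<forall>x y z. vec R x \<longrightarrow> vec R y \<longrightarrow> vec R z \<longrightarrow>
        (\<forall>(p::int) (q::int) (r::int). \<exists>N::nat. \<forall>M\<ge>N.
          (\<lambda>l. \<Sum>j\<le>M. of_int (ibinom p j) *
                 vprod c (p + q - int j) (vprod c (r + int j) x y) z l)
        = (\<lambda>l. \<Sum>j\<le>M. (-1) ^ j * of_int (ibinom r j) *
                 (vprod c (p + r - int j) x (vprod c (q + int j) y z) l
                  - sgn_pow r * vprod c (q + r - int j) y (vprod c (p + int j) x z) l))))"

text \<open>Normally ordered monomials :d^k1 g1 ... d^kr gr: (right nested (-1)-products) in
  elements of G and their derivatives.\<close>
inductive_set nomon :: "(int \<Rightarrow> 'b \<Rightarrow> 'b \<Rightarrow> 'b \<Rightarrow> 'f::comm_ring_1) \<Rightarrow> ('b \<Rightarrow> 'f)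
                         \<Rightarrow> ('b \<Rightarrow> 'f) set \<Rightarrow> ('b \<Rightarrow> 'f) set"
  for c vac G where
  gen: "g \<in> G \<Longrightarrow> (vderiv c vac ^^ k) g \<in> nomon c vac G"
| prod: "g \<in> G \<Longrightarrow> m \<in> nomon c vac G \<Longrightarrow>
           vprod c (-1) ((vderiv c vac ^^ k) g) m \<in> nomon c vac G"

definition rspan :: "'f::comm_ring_1 set \<Rightarrow> ('b \<Rightarrow> 'f) set \<Rightarrow> ('b \<Rightarrow> 'f) set" where
  "rspan R V = {x. \<exists>A f. finite A \<and> A \<subseteq> V \<and> (\<forall>v\<in>A. f v \<in> R) \<and>
                       x = (\<lambda>l. \<Sum>v\<in>A. f v * v l)}"

definition strongly_generates ::
  "'f::comm_ring_1 set \<Rightarrow> (int \<Rightarrow> 'b \<Rightarrow> 'b \<Rightarrow> 'b \<Rightarrow> 'f) \<Rightarrow> ('b \<Rightarrow> 'f) \<Rightarrow> ('b \<Rightarrow> 'f) set \<Rightarrow> bool" where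
  "strongly_generates R c vac G \<longleftrightarrow> {x. vec R x} = rspan R (insert vac (nomon c vac G))"

text \<open>Deformable family: free F_K-module with homogeneous basis indexed by 'b (weights wt),
  each weight space of finite rank, vertex algebra structure over F_K graded by weight.\<close>
definition deformable_family :: "complex set \<Rightarrow> (int \<Rightarrow> 'b \<Rightarrow> 'b \<Rightarrow> 'b \<Rightarrow> ratfun)
                                 \<Rightarrow> ('b \<Rightarrow> ratfun) \<Rightarrow> ('b \<Rightarrow> nat) \<Rightarrow> bool" where
  "deformable_family K c vac wt \<longleftrightarrow>
     is_VA (FK K) c vac \<and> (\<forall>m. finite {i. wt i = m}) \<and>
     (\<forall>n i j l. c n i j l \<noteq> 0 \<longrightarrow> int (wt l) = int (wt i) + int (wt j) - n - 1) \<and>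
     (\<forall>l. vac l \<noteq> 0 \<longrightarrow> wt l = 0)"

definition lim_map :: "('b \<Rightarrow> ratfun) \<Rightarrow> ('b \<Rightarrow> complex)" where
  "lim_map x = (\<lambda>l. lim_inf (x l))"

definition lim_consts :: "(int \<Rightarrow> 'b \<Rightarrow> 'b \<Rightarrow> 'b \<Rightarrow> ratfun) \<Rightarrow> (int \<Rightarrow> 'b \<Rightarrow> 'b \<Rightarrow> 'b \<Rightarrow> complex)" where
  "lim_consts c = (\<lambda>n i j l. lim_inf (c n i j l))"

definition homogeneous :: "('b \<Rightarrow> nat) \<Rightarrow> ('b \<Rightarrow> 'f::zero) \<Rightarrow> bool" where
  "homogeneous wt x \<longleftrightarrow> (\<exists>m. \<forall>l. x l \<noteq> 0 \<longrightarrow> wt l = m)"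

end

theory Submission
  imports Defs "Jordan_Normal_Form.Determinant"
begin

hide_const (open) Matrix.vec

text \<open>Evaluation at infinity is a ring homomorphism on F_K, so the limit map commutes with all
  circle products, and each normally ordered monomial in the limit generators is the limit of the
  same monomial in the a_i. Strong generation of the limit therefore lifts each basis vector e_l
  to an F_K-combination u_l of monomials in the a_i with limit e_l, supported in the weight of l.
  On a weight space, which is finite, the matrix of the u_l has the identity as its value at
  infinity, so its determinant has value 1; inverting it adjoins to K only the finitely many roots
  of the determinant's numerator. Doing this for each of the countably many weights gives S.\<close>

section \<open>Values at infinity\<close>

lemma at_infinity_complex_neq_bot: "(at_infinity :: complex filter) \<noteq> bot"
proof
  assume "(at_infinity :: complex filter) = bot"
  then have "eventually (\<lambda>_. False) (at_infinity :: complex filter)" by simp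
  then obtain b where "\<forall>x::complex. b \<le> norm x \<longrightarrow> False" unfolding eventually_at_infinity by auto
  moreover have "b \<le> norm (complex_of_real \<bar>b\<bar>)" by simp
  ultimately show False by blast
qed

lemma eventually_nonzero_at_infinity: "eventually (\<lambda>z::complex. z \<noteq> 0) at_infinity"
  by (rule eventually_at_infinityI[of 1]) auto

lemma eventually_poly_nonzero_at_infinity:
  fixes q :: "complex poly"
  assumes "q \<noteq> 0"
  shows "eventually (\<lambda>z. poly q z \<noteq> 0) at_infinity"
proof -
  have "eventually (\<lambda>z. poly q z / z ^ degree q \<noteq> 0) at_infinity"
    using assms by (intro tendsto_imp_eventually_ne[OF poly_divide_tendsto_aux]) auto
  then show ?thesis by (rule eventually_mono) auto
qed

lemma poly_divide_power_tendsto: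
  fixes p :: "complex poly"
  assumes "degree p \<le> n"
  shows "((\<lambda>z. poly p z / z ^ n) \<longlongrightarrow> coeff p n) at_infinity"
proof (cases "degree p = n")
  case True
  then show ?thesis using poly_divide_tendsto_aux[of p] by simp
next
  case False
  with assms have lt: "degree p < n" by simp
  have "((\<lambda>z. poly p z / z ^ degree p * inverse z ^ (n - degree p))
          \<longlongrightarrow> lead_coeff p * 0 ^ (n - degree p)) at_infinity"
    by (intro tendsto_mult tendsto_power poly_divide_tendsto_aux tendsto_inverse_0)
  moreover have "eventually (\<lambda>z. poly p z / z ^ degree p * inverse z ^ (n - degree p)
                                 = poly p z / z ^ n) at_infinity"
    using eventually_nonzero_at_infinity
    by (rule eventually_mono) (use lt in \<open>simp add: field_simps power_add[symmetric]\<close>)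
  ultimately have "((\<lambda>z. poly p z / z ^ n) \<longlongrightarrow> lead_coeff p * 0 ^ (n - degree p)) at_infinity"
    by (rule Lim_transform_eventually)
  moreover have "lead_coeff p * 0 ^ (n - degree p) = coeff p n" using lt by (simp add: coeff_eq_0)
  ultimately show ?thesis by simp
qed

lemma poly_divide_poly_tendsto:
  fixes p q :: "complex poly"
  assumes "q \<noteq> 0" "degree p \<le> degree q"
  shows "((\<lambda>z. poly p z / poly q z) \<longlongrightarrow> coeff p (degree q) / lead_coeff q) at_infinity"
proof -
  have "((\<lambda>z. (poly p z / z ^ degree q) / (poly q z / z ^ degree q))
          \<longlongrightarrow> coeff p (degree q) / lead_coeff q) at_infinity"
    using assms by (intro tendsto_divide poly_divide_power_tendsto) auto
  moreover have "eventually (\<lambda>z. (poly p z / z ^ degree q) / (poly q z / z ^ degree q)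
                                 = poly p z / poly q z) at_infinity"
    using eventually_nonzero_at_infinity by (rule eventually_mono) (simp add: field_simps)
  ultimately show ?thesis by (rule Lim_transform_eventually)
qed

lemma lim_inf_Fract:
  assumes "Q \<noteq> 0" "((\<lambda>z. poly P z / poly Q z) \<longlongrightarrow> c) at_infinity"
  shows "lim_inf (Fract P Q) = c"
  unfolding lim_inf_def
proof (rule the_equality)
  show "\<exists>p q. q \<noteq> 0 \<and> Fract P Q = Fract p q \<and> ((\<lambda>z. poly p z / poly q z) \<longlongrightarrow> c) at_infinity"
    using assms by blast
next
  fix c' assume "\<exists>p q. q \<noteq> 0 \<and> Fract P Q = Fract p q \<and> ((\<lambda>z. poly p z / poly q z) \<longlongrightarrow> c') at_infinity"
  then obtain p q where q: "q \<noteq> 0" and eq: "Fract P Q = Fract p q"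
    and lim: "((\<lambda>z. poly p z / poly q z) \<longlongrightarrow> c') at_infinity" by blast
  have cross: "P * q = p * Q" using eq q assms(1) by (simp add: eq_fract)
  have "eventually (\<lambda>z. poly p z / poly q z = poly P z / poly Q z) at_infinity"
    using eventually_conj[OF eventually_poly_nonzero_at_infinity[OF q]
                             eventually_poly_nonzero_at_infinity[OF assms(1)]]
    by (rule eventually_mono) (use arg_cong[OF cross, of "\<lambda>r. poly r _"] in \<open>simp add: field_simps\<close>)
  with lim have "((\<lambda>z. poly P z / poly Q z) \<longlongrightarrow> c') at_infinity" by (simp add: tendsto_cong)
  then show "c' = c" using tendsto_unique[OF at_infinity_complex_neq_bot _ assms(2)] by blast
qed

section \<open>The rings F_K\<close>

lemma FK_elim:
  assumes "f \<in> FK K"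
  obtains p q where "q \<noteq> 0" "degree p \<le> degree q" "\<forall>z. poly q z = 0 \<longrightarrow> z \<in> K"
    "f = Fract p q" "((\<lambda>z. poly p z / poly q z) \<longlongrightarrow> lim_inf f) at_infinity"
    "lim_inf f = coeff p (degree q) / lead_coeff q"
proof -
  from assms obtain p q where pq: "q \<noteq> 0" "degree p \<le> degree q" "\<forall>z. poly q z = 0 \<longrightarrow> z \<in> K"
    "f = Fract p q" unfolding FK_def by blast
  note lim = poly_divide_poly_tendsto[OF pq(1,2)]
  have "lim_inf f = coeff p (degree q) / lead_coeff q" using lim_inf_Fract[OF pq(1) lim] pq(4) by simp
  with that pq lim show ?thesis by simp
qed

lemma FK_mono: "K \<subseteq> S \<Longrightarrow> FK K \<subseteq> FK S"
  unfolding FK_def by blast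

lemma FK_const: "Fract [:z:] 1 \<in> FK K \<and> lim_inf (Fract [:z:] 1) = z"
proof
  show "Fract [:z:] 1 \<in> FK K" unfolding FK_def by (intro CollectI exI[of _ "[:z:]"] exI[of _ 1]) simp
  show "lim_inf (Fract [:z:] 1) = z" by (rule lim_inf_Fract) auto
qed

lemma FK_add:
  assumes "f \<in> FK K" "g \<in> FK K"
  shows "f + g \<in> FK K \<and> lim_inf (f + g) = lim_inf f + lim_inf g"
proof -
  obtain p q where f: "q \<noteq> 0" "degree p \<le> degree q" "\<forall>z. poly q z = 0 \<longrightarrow> z \<in> K" "f = Fract p q"
    "((\<lambda>z. poly p z / poly q z) \<longlongrightarrow> lim_inf f) at_infinity" using FK_elim[OF assms(1)] .
  obtain p' q' where g: "q' \<noteq> 0" "degree p' \<le> degree q'" "\<forall>z. poly q' z = 0 \<longrightarrow> z \<in> K" "g = Fract p' q'"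
    "((\<lambda>z. poly p' z / poly q' z) \<longlongrightarrow> lim_inf g) at_infinity" using FK_elim[OF assms(2)] .
  let ?p = "p * q' + p' * q" and ?q = "q * q'"
  have sum: "f + g = Fract ?p ?q" and q: "?q \<noteq> 0" using f g by simp_all
  have "degree (p * q') \<le> degree ?q" "degree (p' * q) \<le> degree ?q"
    using degree_mult_le[of p q'] degree_mult_le[of p' q] f(1,2) g(1,2) by (simp_all add: degree_mult_eq)
  then have deg: "degree ?p \<le> degree ?q" by (rule degree_add_le)
  have roots: "\<forall>z. poly ?q z = 0 \<longrightarrow> z \<in> K" using f(3) g(3) by auto
  have "eventually (\<lambda>z. poly p z / poly q z + poly p' z / poly q' z = poly ?p z / poly ?q z) at_infinity"
    using eventually_conj[OF eventually_poly_nonzero_at_infinity[OF f(1)]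
                             eventually_poly_nonzero_at_infinity[OF g(1)]]
    by (rule eventually_mono) (simp add: field_simps)
  then have "((\<lambda>z. poly ?p z / poly ?q z) \<longlongrightarrow> lim_inf f + lim_inf g) at_infinity"
    using tendsto_add[OF f(5) g(5)] by (simp add: tendsto_cong)
  then have "lim_inf (f + g) = lim_inf f + lim_inf g" unfolding sum by (rule lim_inf_Fract[OF q])
  moreover have "f + g \<in> FK K" unfolding FK_def using sum q deg roots by blast
  ultimately show ?thesis by simp
qed

lemma FK_mult:
  assumes "f \<in> FK K" "g \<in> FK K"
  shows "f * g \<in> FK K \<and> lim_inf (f * g) = lim_inf f * lim_inf g"
proof -
  obtain p q where f: "q \<noteq> 0" "degree p \<le> degree q" "\<forall>z. poly q z = 0 \<longrightarrow> z \<in> K" "f = Fract p q"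
    "((\<lambda>z. poly p z / poly q z) \<longlongrightarrow> lim_inf f) at_infinity" using FK_elim[OF assms(1)] .
  obtain p' q' where g: "q' \<noteq> 0" "degree p' \<le> degree q'" "\<forall>z. poly q' z = 0 \<longrightarrow> z \<in> K" "g = Fract p' q'"
    "((\<lambda>z. poly p' z / poly q' z) \<longlongrightarrow> lim_inf g) at_infinity" using FK_elim[OF assms(2)] .
  have prod: "f * g = Fract (p * p') (q * q')" and q: "q * q' \<noteq> 0" using f g by simp_all
  have deg: "degree (p * p') \<le> degree (q * q')"
    using degree_mult_le[of p p'] f(1,2) g(1,2) by (simp add: degree_mult_eq)
  have roots: "\<forall>z. poly (q * q') z = 0 \<longrightarrow> z \<in> K" using f(3) g(3) by auto
  have "((\<lambda>z. poly (p * p') z / poly (q * q') z) \<longlongrightarrow> lim_inf f * lim_inf g) at_infinity"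
    using tendsto_mult[OF f(5) g(5)] by simp
  then have "lim_inf (f * g) = lim_inf f * lim_inf g" unfolding prod by (rule lim_inf_Fract[OF q])
  moreover have "f * g \<in> FK K" unfolding FK_def using prod q deg roots by blast
  ultimately show ?thesis by simp
qed

lemma FK_zero: "0 \<in> FK K \<and> lim_inf 0 = 0"
  using FK_const[of 0 K] by (simp add: Zero_fract_def)

lemma FK_one: "1 \<in> FK K \<and> lim_inf 1 = 1"
  using FK_const[of 1 K] by (simp add: One_fract_def one_pCons[symmetric])

lemma FK_uminus:
  assumes "f \<in> FK K"
  shows "- f \<in> FK K \<and> lim_inf (- f) = - lim_inf f"
proof -
  have minus_one: "Fract [:- 1:] 1 = - 1"
    by (metis One_fract_def minus_fract one_pCons minus_pCons neg_0_equal_iff_equal)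
  show ?thesis using FK_mult[OF conjunct1[OF FK_const[of "- 1"]] assms] FK_const[of "- 1" K]
    by (simp add: minus_one)
qed

lemma FK_of_nat: "of_nat n \<in> FK K \<and> lim_inf (of_nat n) = of_nat n"
proof (induction n)
  case (Suc n)
  then show ?case using FK_add[OF conjunct1[OF FK_one] conjunct1[OF Suc]] FK_one by simp
qed (simp add: FK_zero)

lemma FK_of_int: "of_int k \<in> FK K \<and> lim_inf (of_int k) = of_int k"
proof (cases k rule: int_cases)
  case (neg n)
  then show ?thesis using FK_uminus[OF conjunct1[OF FK_of_nat[of "Suc n" K]]] FK_of_nat[of "Suc n" K] by simp
qed (simp add: FK_of_nat)

lemma FK_sum:
  assumes "finite A" "\<forall>x\<in>A. f x \<in> FK K"
  shows "sum f A \<in> FK K \<and> lim_inf (sum f A) = (\<Sum>x\<in>A. lim_inf (f x))"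
  using assms
proof (induction A rule: finite_induct)
  case (insert x F)
  then show ?case using FK_add[of "f x" K "sum f F"] by simp
qed (simp add: FK_zero)

lemma FK_prod:
  assumes "finite A" "\<forall>x\<in>A. f x \<in> FK K"
  shows "prod f A \<in> FK K \<and> lim_inf (prod f A) = (\<Prod>x\<in>A. lim_inf (f x))"
  using assms
proof (induction A rule: finite_induct)
  case (insert x F)
  then show ?case using FK_mult[of "f x" K "prod f F"] by simp
qed (simp add: FK_one)

text \<open>Inverting puts the numerator into the denominator, so its finitely many roots become
  new poles.\<close>
lemma FK_inverse:
  assumes "f \<in> FK K" "lim_inf f \<noteq> 0"
  obtains Z where "finite Z" "inverse f \<in> FK (K \<union> Z)"
proof -
  obtain p q where f: "q \<noteq> 0" "degree p \<le> degree q" "\<forall>z. poly q z = 0 \<longrightarrow> z \<in> K" "f = Fract p q"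
    "lim_inf f = coeff p (degree q) / lead_coeff q" using FK_elim[OF assms(1)] .
  have "coeff p (degree q) \<noteq> 0" using assms(2) f(5) by auto
  then have "degree q \<le> degree p" "p \<noteq> 0" by (auto intro: le_degree)
  moreover have "inverse f = Fract q p" using f(4) by simp
  ultimately have "inverse f \<in> FK (K \<union> {z. poly p z = 0})" unfolding FK_def using f(1) by blast
  with that show ?thesis using poly_roots_finite[OF \<open>p \<noteq> 0\<close>] by blast
qed

section \<open>Spans over a subring\<close>

definition is_subring :: "'f::comm_ring_1 set \<Rightarrow> bool" where
  "is_subring R \<longleftrightarrow> 0 \<in> R \<and> 1 \<in> R \<and> (\<forall>x\<in>R. \<forall>y\<in>R. x + y \<in> R \<and> x * y \<in> R \<and> - x \<in> R)"

lemma is_subring_FK: "is_subring (FK K)"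
  unfolding is_subring_def by (simp add: FK_zero FK_one FK_add FK_mult FK_uminus)

lemma subring_mult: "is_subring R \<Longrightarrow> x \<in> R \<Longrightarrow> y \<in> R \<Longrightarrow> x * y \<in> R"
  unfolding is_subring_def by simp

lemma subring_sum:
  assumes "is_subring R" "\<forall>x\<in>A. f x \<in> R"
  shows "sum f A \<in> R"
proof (cases "finite A")
  case True
  then show ?thesis using assms
    by (induction A rule: finite_induct) (simp_all add: is_subring_def)
qed (use assms in \<open>simp add: is_subring_def\<close>)

lemma vec_mono: "R \<subseteq> R' \<Longrightarrow> vec R x \<Longrightarrow> vec R' x"
  unfolding Defs.vec_def by blast

lemma rspan_mono:
  assumes "R \<subseteq> R'" "V \<subseteq> V'"
  shows "rspan R V \<subseteq> rspan R' V'"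
proof
  fix x assume "x \<in> rspan R V"
  then obtain A f where "finite A" "A \<subseteq> V" "\<forall>v\<in>A. f v \<in> R" "x = (\<lambda>l. \<Sum>v\<in>A. f v * v l)"
    unfolding rspan_def by blast
  with assms show "x \<in> rspan R' V'" unfolding rspan_def by (intro CollectI exI[of _ A] exI[of _ f]) blast
qed

lemma rspan_zero: "is_subring R \<Longrightarrow> (\<lambda>_. 0) \<in> rspan R V"
  unfolding rspan_def by (intro CollectI exI[of _ "{}"]) simp

lemma rspan_base: "is_subring R \<Longrightarrow> v \<in> V \<Longrightarrow> v \<in> rspan R V"
  unfolding rspan_def is_subring_def by (intro CollectI exI[of _ "{v}"] exI[of _ "\<lambda>_. 1"]) simp

lemma rspan_add:
  assumes "is_subring R" "x \<in> rspan R V" "y \<in> rspan R V"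
  shows "(\<lambda>l. x l + y l) \<in> rspan R V"
proof -
  obtain A f where A: "finite A" "A \<subseteq> V" "\<forall>v\<in>A. f v \<in> R" "x = (\<lambda>l. \<Sum>v\<in>A. f v * v l)"
    using assms(2) unfolding rspan_def by blast
  obtain B g where B: "finite B" "B \<subseteq> V" "\<forall>v\<in>B. g v \<in> R" "y = (\<lambda>l. \<Sum>v\<in>B. g v * v l)"
    using assms(3) unfolding rspan_def by blast
  define h where "h v = (if v \<in> A then f v else 0) + (if v \<in> B then g v else 0)" for v
  have "\<forall>v\<in>A \<union> B. h v \<in> R" using A(3) B(3) assms(1) unfolding h_def is_subring_def by auto
  moreover have "(\<lambda>l. x l + y l) = (\<lambda>l. \<Sum>v\<in>A \<union> B. h v * v l)"
  proof
    fix l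
    have "(\<Sum>v\<in>A \<union> B. h v * v l)
        = (\<Sum>v\<in>A \<union> B. if v \<in> A then f v * v l else 0) + (\<Sum>v\<in>A \<union> B. if v \<in> B then g v * v l else 0)"
      unfolding sum.distrib[symmetric] by (rule sum.cong) (auto simp: h_def algebra_simps)
    also have "\<dots> = x l + y l"
      unfolding A(4) B(4) using A(1) B(1) by (simp add: sum.If_cases Int_absorb1 Int_absorb2)
    finally show "x l + y l = (\<Sum>v\<in>A \<union> B. h v * v l)" ..
  qed
  ultimately show ?thesis unfolding rspan_def using A(1,2) B(1,2)
    by (intro CollectI exI[of _ "A \<union> B"] exI[of _ h]) simp
qed

lemma rspan_smult:
  assumes "is_subring R" "r \<in> R" "x \<in> rspan R V"
  shows "(\<lambda>l. r * x l) \<in> rspan R V"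
proof -
  obtain A f where A: "finite A" "A \<subseteq> V" "\<forall>v\<in>A. f v \<in> R" "x = (\<lambda>l. \<Sum>v\<in>A. f v * v l)"
    using assms(3) unfolding rspan_def by blast
  have "(\<lambda>l. r * x l) = (\<lambda>l. \<Sum>v\<in>A. (r * f v) * v l)"
    using A(4) by (simp add: sum_distrib_left mult.assoc)
  moreover have "\<forall>v\<in>A. r * f v \<in> R" using A(3) assms(1,2) subring_mult by blast
  ultimately show ?thesis unfolding rspan_def using A(1,2)
    by (intro CollectI exI[of _ A] exI[of _ "\<lambda>v. r * f v"]) simp
qed

lemma rspan_sum:
  assumes "is_subring R" "finite B" "\<forall>k\<in>B. g k \<in> R" "\<forall>k\<in>B. u k \<in> rspan R V"
  shows "(\<lambda>l. \<Sum>k\<in>B. g k * u k l) \<in> rspan R V"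
  using assms(2-4)
proof (induction B rule: finite_induct)
  case (insert x F)
  then show ?case using rspan_add[OF assms(1) rspan_smult[OF assms(1)] insert.IH] by simp
qed (use rspan_zero[OF assms(1)] in simp)

lemma rspan_vec:
  assumes R: "is_subring R" and V: "\<forall>v\<in>V. vec R v" and x: "x \<in> rspan R V"
  shows "vec R x"
proof -
  obtain A f where A: "finite A" "A \<subseteq> V" "\<forall>v\<in>A. f v \<in> R" "x = (\<lambda>l. \<Sum>v\<in>A. f v * v l)"
    using x unfolding rspan_def by blast
  have "{l. x l \<noteq> 0} \<subseteq> (\<Union>v\<in>A. {l. v l \<noteq> 0})"
  proof
    fix l assume "l \<in> {l. x l \<noteq> 0}"
    then have "(\<Sum>v\<in>A. f v * v l) \<noteq> 0" using A(4) by simp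
    then obtain v where "v \<in> A" "f v * v l \<noteq> 0" by (rule sum.not_neutral_contains_not_neutral)
    then show "l \<in> (\<Union>v\<in>A. {l. v l \<noteq> 0})" by (intro UN_I[of v]) auto
  qed
  moreover have "finite (\<Union>v\<in>A. {l. v l \<noteq> 0})" using A(1,2) V unfolding Defs.vec_def by auto
  ultimately have "finite {l. x l \<noteq> 0}" by (rule finite_subset)
  moreover have "x l \<in> R" for l
  proof -
    have "\<forall>v\<in>A. f v * v l \<in> R" using A(2,3) V subring_mult[OF R] unfolding Defs.vec_def by blast
    then show ?thesis using A(4) subring_sum[OF R] by simp
  qed
  ultimately show ?thesis unfolding Defs.vec_def by simp
qed

definition basis_vec :: "'b \<Rightarrow> 'b \<Rightarrow> 'f::zero_neq_one" where
  "basis_vec l = (\<lambda>l'. if l' = l then 1 else 0)"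

lemma vec_set_eq_rspan:
  fixes V :: "('b \<Rightarrow> 'f::comm_ring_1) set"
  assumes R: "is_subring R" and V: "\<forall>v\<in>V. vec R v" and basis: "\<forall>l. basis_vec l \<in> rspan R V"
  shows "{x. vec R x} = rspan R V"
proof
  show "{x. vec R x} \<subseteq> rspan R V"
  proof
    fix x :: "'b \<Rightarrow> 'f" assume "x \<in> {x. vec R x}"
    then have fin: "finite {l. x l \<noteq> 0}" and xR: "\<forall>l. x l \<in> R" unfolding Defs.vec_def by auto
    have "x = (\<lambda>l'. \<Sum>l\<in>{l. x l \<noteq> 0}. x l * basis_vec l l')"
    proof
      fix l'
      have "(\<Sum>l\<in>{l. x l \<noteq> 0}. x l * basis_vec l l') = (\<Sum>l\<in>{l. x l \<noteq> 0}. if l = l' then x l else 0)"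
        by (rule sum.cong) (auto simp: basis_vec_def)
      also have "\<dots> = x l'" using fin by (simp add: sum.delta')
      finally show "x l' = (\<Sum>l\<in>{l. x l \<noteq> 0}. x l * basis_vec l l')" ..
    qed
    also have "\<dots> \<in> rspan R V" using rspan_sum[OF R fin] xR basis by blast
    finally show "x \<in> rspan R V" .
  qed
  show "rspan R V \<subseteq> {x. vec R x}" using rspan_vec[OF R V] by blast
qed

definition weight_proj :: "('b \<Rightarrow> nat) \<Rightarrow> nat \<Rightarrow> ('b \<Rightarrow> 'f::zero) \<Rightarrow> 'b \<Rightarrow> 'f" where
  "weight_proj wt m x = (\<lambda>l. if wt l = m then x l else 0)"

lemma weight_proj_homogeneous:
  assumes "homogeneous wt v"
  shows "weight_proj wt m v = v \<or> weight_proj wt m v = (\<lambda>_. 0)"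
proof -
  obtain m' where m': "\<forall>l. v l \<noteq> 0 \<longrightarrow> wt l = m'" using assms unfolding homogeneous_def by blast
  show ?thesis
  proof (cases "m' = m")
    case True
    then have "weight_proj wt m v = v" using m' unfolding weight_proj_def by (auto simp: fun_eq_iff)
    then show ?thesis ..
  next
    case False
    then have "weight_proj wt m v = (\<lambda>_. 0)" using m' unfolding weight_proj_def by (auto simp: fun_eq_iff)
    then show ?thesis ..
  qed
qed

lemma rspan_weight_proj:
  assumes R: "is_subring R" and V: "\<forall>v\<in>V. homogeneous wt v" and x: "x \<in> rspan R V"
  shows "weight_proj wt m x \<in> rspan R V"
proof -
  obtain A f where A: "finite A" "A \<subseteq> V" "\<forall>v\<in>A. f v \<in> R" "x = (\<lambda>l. \<Sum>v\<in>A. f v * v l)"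
    using x unfolding rspan_def by blast
  have "weight_proj wt m x = (\<lambda>l. \<Sum>v\<in>A. f v * weight_proj wt m v l)"
    unfolding A(4) weight_proj_def by (rule ext) simp
  moreover have "\<forall>v\<in>A. weight_proj wt m v \<in> rspan R V"
  proof
    fix v assume "v \<in> A"
    then have "v \<in> V" using A(2) by blast
    then have "homogeneous wt v" "v \<in> rspan R V" using V rspan_base[OF R] by blast+
    then show "weight_proj wt m v \<in> rspan R V"
      using weight_proj_homogeneous[of wt v m] rspan_zero[OF R] by force
  qed
  ultimately show ?thesis using rspan_sum[OF R A(1) A(3)] by simp
qed

section \<open>Matrices over F_K\<close>

lemma FK_det:
  assumes A: "A \<in> carrier_mat n n" and entries: "\<forall>i<n. \<forall>j<n. A $$ (i,j) \<in> FK K"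
  shows "det A \<in> FK K \<and> lim_inf (det A) = det (map_mat lim_inf A)"
proof -
  let ?P = "{p. p permutes {0..<n}}"
  have summand: "signof p * (\<Prod>i=0..<n. A $$ (i, p i)) \<in> FK K \<and>
      lim_inf (signof p * (\<Prod>i=0..<n. A $$ (i, p i))) = signof p * (\<Prod>i=0..<n. map_mat lim_inf A $$ (i, p i))"
    if "p \<in> ?P" for p
  proof -
    have p_range: "p i < n" if "i \<in> {0..<n}" for i
      using permutes_in_image \<open>p \<in> ?P\<close> that by auto
    then have "\<forall>i\<in>{0..<n}. A $$ (i, p i) \<in> FK K" using entries by auto
    moreover have "(\<Prod>i=0..<n. lim_inf (A $$ (i, p i))) = (\<Prod>i=0..<n. map_mat lim_inf A $$ (i, p i))"
      by (rule prod.cong) (use A p_range in auto)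
    ultimately have prod: "(\<Prod>i=0..<n. A $$ (i, p i)) \<in> FK K \<and>
        lim_inf (\<Prod>i=0..<n. A $$ (i, p i)) = (\<Prod>i=0..<n. map_mat lim_inf A $$ (i, p i))"
      using FK_prod[of "{0..<n}"] by simp
    show ?thesis
      using FK_mult[OF conjunct1[OF FK_of_int[of "sign p" K]] conjunct1[OF prod]] FK_of_int[of "sign p" K] prod
      by simp
  qed
  have "det A \<in> FK K \<and> lim_inf (det A) = (\<Sum>p\<in>?P. lim_inf (signof p * (\<Prod>i=0..<n. A $$ (i, p i))))"
    unfolding det_def'[OF A] using summand by (intro FK_sum) (simp_all add: finite_permutations)
  moreover have "det (map_mat lim_inf A) = (\<Sum>p\<in>?P. signof p * (\<Prod>i=0..<n. map_mat lim_inf A $$ (i, p i)))"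
    using A by (intro det_def') simp
  ultimately show ?thesis using summand by simp
qed

lemma FK_adj_mat:
  assumes A: "A \<in> carrier_mat n n" and entries: "\<forall>i<n. \<forall>j<n. A $$ (i,j) \<in> FK K"
    and "i < n" "j < n"
  shows "adj_mat A $$ (i,j) \<in> FK K"
proof -
  have "mat_delete A j i $$ (i',j') \<in> FK K" if "i' < n - 1" "j' < n - 1" for i' j'
  proof -
    have "(if i' < j then i' else Suc i') < n" "(if j' < i then j' else Suc j') < n" using that by auto
    then show ?thesis unfolding mat_delete_def using that A entries by simp
  qed
  then have "det (mat_delete A j i) \<in> FK K" using FK_det[OF mat_delete_carrier[OF A]] by blast
  moreover have "(- 1 :: ratfun) ^ (j + i) \<in> FK K" using FK_of_int[of "(- 1) ^ (j + i)" K] by simp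
  moreover have "adj_mat A $$ (i,j) = (- 1) ^ (j + i) * det (mat_delete A j i)"
    unfolding adj_mat_def cofactor_def using A assms(3,4) by simp
  ultimately show ?thesis using subring_mult[OF is_subring_FK] by simp
qed

lemma FK_inverse_mat_near_identity:
  assumes Q: "Q \<in> carrier_mat d d" and entries: "\<forall>i<d. \<forall>j<d. Q $$ (i,j) \<in> FK K"
    and lim: "map_mat lim_inf Q = 1\<^sub>m d"
  obtains Z B where "finite Z" "B \<in> carrier_mat d d" "\<forall>i<d. \<forall>j<d. B $$ (i,j) \<in> FK (K \<union> Z)"
    "Q * B = 1\<^sub>m d"
proof -
  have det: "det Q \<in> FK K" "lim_inf (det Q) = 1" using FK_det[OF Q entries] lim by simp_all
  then obtain Z where Z: "finite Z" "inverse (det Q) \<in> FK (K \<union> Z)" by (auto elim: FK_inverse)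
  have "det Q \<noteq> 0" using det(2) FK_zero by auto
  define B where "B = inverse (det Q) \<cdot>\<^sub>m adj_mat Q"
  have adj: "adj_mat Q \<in> carrier_mat d d" by (rule adj_mat(1)[OF Q])
  have "B \<in> carrier_mat d d" unfolding B_def using adj by simp
  moreover have "B $$ (i,j) \<in> FK (K \<union> Z)" if "i < d" "j < d" for i j
  proof -
    have "adj_mat Q $$ (i,j) \<in> FK (K \<union> Z)"
      using FK_adj_mat[OF Q entries that] FK_mono[of K "K \<union> Z"] by blast
    then show ?thesis
      unfolding B_def using that adj Z(2) subring_mult[OF is_subring_FK] by simp
  qed
  moreover have "Q * B = 1\<^sub>m d"
  proof -
    have "Q * B = inverse (det Q) \<cdot>\<^sub>m (det Q \<cdot>\<^sub>m 1\<^sub>m d)"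
      unfolding B_def using mult_smult_distrib[OF Q adj] adj_mat(2)[OF Q] by simp
    also have "\<dots> = 1\<^sub>m d" using \<open>det Q \<noteq> 0\<close> by (intro eq_matI) auto
    finally show ?thesis .
  qed
  ultimately show ?thesis using that Z(1) by blast
qed

lemma basis_vecs_from_near_identity:
  fixes u :: "'b \<Rightarrow> 'b \<Rightarrow> ratfun"
  assumes L: "finite L"
    and entries: "\<forall>k\<in>L. \<forall>l'\<in>L. u k l' \<in> FK K"
    and support: "\<forall>k\<in>L. \<forall>l'. l' \<notin> L \<longrightarrow> u k l' = 0"
    and lim: "\<forall>k\<in>L. \<forall>l'\<in>L. lim_inf (u k l') = (if l' = k then 1 else 0)"
    and span: "\<forall>k\<in>L. u k \<in> rspan (FK K) V"
  obtains Z where "finite Z" "\<forall>l\<in>L. basis_vec l \<in> rspan (FK (K \<union> Z)) V"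
proof -
  define d where "d = card L"
  obtain e where e: "bij_betw e {..<d} L"
    using ex_bij_betw_nat_finite[OF L] unfolding d_def atLeast0LessThan by blast
  define idx where "idx = the_inv_into {..<d} e"
  have idx: "idx k < d" "e (idx k) = k" if "k \<in> L" for k
    using that bij_betw_the_inv_into[OF e] f_the_inv_into_f_bij_betw[OF e]
    unfolding idx_def bij_betw_def by auto
  have idx_e: "idx (e r) = r" if "r < d" for r
    using the_inv_into_f_f[of e "{..<d}" r] e that unfolding idx_def bij_betw_def by simp
  have e_inj: "e r = e r' \<longleftrightarrow> r = r'" if "r < d" "r' < d" for r r'
    using e that unfolding bij_betw_def inj_on_def by auto
  have e_range: "e r \<in> L" if "r < d" for r using e that unfolding bij_betw_def by auto
  define Q where "Q = mat d d (\<lambda>(r,k). u (e k) (e r))"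
  have Q: "Q \<in> carrier_mat d d" unfolding Q_def by simp
  have "\<forall>r<d. \<forall>k<d. Q $$ (r,k) \<in> FK K" using entries e_range unfolding Q_def by simp
  moreover have "map_mat lim_inf Q = 1\<^sub>m d"
    by (rule eq_matI) (use lim e_range e_inj in \<open>auto simp: Q_def\<close>)
  ultimately obtain Z B where Z: "finite Z" and B: "B \<in> carrier_mat d d"
    "\<forall>i<d. \<forall>j<d. B $$ (i,j) \<in> FK (K \<union> Z)" "Q * B = 1\<^sub>m d"
    using FK_inverse_mat_near_identity[OF Q] by blast
  have "basis_vec l \<in> rspan (FK (K \<union> Z)) V" if "l \<in> L" for l
  proof -
    let ?g = "\<lambda>k. B $$ (idx k, idx l)"
    have "basis_vec l = (\<lambda>l'. \<Sum>k\<in>L. ?g k * u k l')"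
    proof
      fix l'
      show "basis_vec l l' = (\<Sum>k\<in>L. ?g k * u k l')"
      proof (cases "l' \<in> L")
        case False
        then show ?thesis using support \<open>l \<in> L\<close> unfolding basis_vec_def by auto
      next
        case True
        have "(\<Sum>k\<in>L. ?g k * u k l') = (\<Sum>i<d. ?g (e i) * u (e i) l')"
          by (rule sum.reindex_bij_betw[OF e, symmetric])
        also have "\<dots> = (\<Sum>i\<in>{0..<d}. Q $$ (idx l', i) * B $$ (i, idx l))"
          by (rule sum.cong) (use idx idx_e e_range e_inj True in \<open>auto simp: Q_def\<close>)
        also have "\<dots> = (Q * B) $$ (idx l', idx l)"
          using Q B(1) idx True \<open>l \<in> L\<close> by (simp add: scalar_prod_def)
        also have "\<dots> = basis_vec l l'"
          using B(3) idx True \<open>l \<in> L\<close> unfolding basis_vec_def by (metis index_one_mat)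
        finally show ?thesis ..
      qed
    qed
    moreover have "?g k \<in> FK (K \<union> Z)" if "k \<in> L" for k using B(2) idx \<open>k \<in> L\<close> \<open>l \<in> L\<close> by blast
    moreover have "u k \<in> rspan (FK (K \<union> Z)) V" if "k \<in> L" for k
      using span rspan_mono[OF FK_mono subset_refl, of K "K \<union> Z"] \<open>k \<in> L\<close> by blast
    ultimately show ?thesis by (simp add: rspan_sum[OF is_subring_FK L])
  qed
  with Z that show ?thesis by blast
qed

section \<open>The limit map\<close>

lemma rspan_lim_map_lift:
  assumes W: "\<forall>w\<in>W. vec (FK K) w" and y: "y \<in> rspan UNIV (lim_map ` W)"
  obtains x where "x \<in> rspan (FK K) W" "lim_map x = y"
proof -
  obtain A f where A: "finite A" "A \<subseteq> lim_map ` W" "y = (\<lambda>l. \<Sum>v\<in>A. f v * v l)"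
    using y unfolding rspan_def by blast
  then have "\<forall>v\<in>A. \<exists>w. w \<in> W \<and> lim_map w = v" by blast
  then obtain w where w: "\<forall>v\<in>A. w v \<in> W \<and> lim_map (w v) = v" by (elim bchoice[THEN exE])
  define x where "x = (\<lambda>l. \<Sum>v\<in>A. Fract [:f v:] 1 * w v l)"
  have "\<forall>v\<in>A. w v \<in> rspan (FK K) W" using w rspan_base[OF is_subring_FK] by blast
  then have "x \<in> rspan (FK K) W"
    unfolding x_def using FK_const by (intro rspan_sum[OF is_subring_FK A(1)]) auto
  moreover have "lim_map x = y"
  proof
    fix l
    have "\<forall>v\<in>A. Fract [:f v:] 1 * w v l \<in> FK K \<and> lim_inf (Fract [:f v:] 1 * w v l) = f v * v l"
    proof
      fix v assume "v \<in> A"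
      then have "w v \<in> W" "lim_map (w v) l = v l" using w by simp_all
      then have "w v l \<in> FK K" "lim_inf (w v l) = v l" using W unfolding Defs.vec_def lim_map_def by simp_all
      then show "Fract [:f v:] 1 * w v l \<in> FK K \<and> lim_inf (Fract [:f v:] 1 * w v l) = f v * v l"
        using FK_mult[OF conjunct1[OF FK_const]] FK_const by simp
    qed
    then show "lim_map x l = y l"
      unfolding x_def lim_map_def A(3) using FK_sum[OF A(1), of "\<lambda>v. Fract [:f v:] 1 * w v l" K] by simp
  qed
  ultimately show ?thesis using that by blast
qed

lemma lim_map_weight_proj: "lim_map (weight_proj wt m x) = weight_proj wt m (lim_map x)"
  unfolding lim_map_def weight_proj_def using FK_zero by auto

lemma weight_proj_basis_vec: "weight_proj wt (wt l) (basis_vec l) = basis_vec l"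
  unfolding weight_proj_def basis_vec_def by auto

lemma vprod_eq_sum_over_supersets:
  assumes "finite X" "{i. x i \<noteq> 0} \<subseteq> X" "finite Y" "{j. y j \<noteq> 0} \<subseteq> Y"
  shows "vprod c n x y l = (\<Sum>i\<in>X. \<Sum>j\<in>Y. x i * y j * c n i j l)"
proof -
  have "finite {j. y j \<noteq> 0}" using assms(3,4) by (rule finite_subset[rotated])
  then have "vprod c n x y l = (\<Sum>i\<in>{i. x i \<noteq> 0}. \<Sum>j\<in>Y. x i * y j * c n i j l)"
    unfolding vprod_def by (intro sum.cong[OF refl] sum.mono_neutral_left) (use assms in auto)
  also have "\<dots> = (\<Sum>i\<in>X. \<Sum>j\<in>Y. x i * y j * c n i j l)"
    by (rule sum.mono_neutral_left) (use assms in auto)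
  finally show ?thesis .
qed

lemma vprod_nonzero_obtain:
  assumes "vprod c n x y l \<noteq> 0"
  obtains i j where "x i \<noteq> 0" "y j \<noteq> 0" "c n i j l \<noteq> 0"
proof -
  obtain i where i: "i \<in> {i. x i \<noteq> 0}" "(\<Sum>j\<in>{j. y j \<noteq> 0}. x i * y j * c n i j l) \<noteq> 0"
    using assms unfolding vprod_def by (rule sum.not_neutral_contains_not_neutral)
  from i(2) obtain j where j: "j \<in> {j. y j \<noteq> 0}" "x i * y j * c n i j l \<noteq> 0"
    by (rule sum.not_neutral_contains_not_neutral)
  then have "c n i j l \<noteq> 0" by auto
  with i(1) j(1) show ?thesis by (intro that) simp_all
qed

section \<open>Deformable families\<close>

locale deformable =
  fixes K :: "complex set" and c :: "int \<Rightarrow> 'b \<Rightarrow> 'b \<Rightarrow> 'b \<Rightarrow> ratfun"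
    and vac :: "'b \<Rightarrow> ratfun" and wt :: "'b \<Rightarrow> nat"
  assumes deformable_family: "deformable_family K c vac wt"
begin

lemma is_VA: "is_VA (FK K) c vac"
  using deformable_family unfolding deformable_family_def by simp

lemma consts_FK: "c n i j l \<in> FK K"
  using is_VA unfolding is_VA_def by simp

lemma vac_vec: "vec (FK K) vac"
  using is_VA unfolding is_VA_def by simp

lemma weight_of_consts:
  assumes "c n i j l \<noteq> 0"
  shows "wt l = nat (int (wt i) + int (wt j) - n - 1)"
proof -
  have "int (wt l) = int (wt i) + int (wt j) - n - 1"
    using deformable_family assms unfolding deformable_family_def by blast
  then show ?thesis by simp
qed

lemma finite_weight_space: "finite {l. wt l = m}"
  using deformable_family unfolding deformable_family_def by blast

lemma vac_homogeneous: "homogeneous wt vac"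
proof -
  have "\<forall>l. vac l \<noteq> 0 \<longrightarrow> wt l = 0"
    using deformable_family unfolding deformable_family_def by blast
  then show ?thesis unfolding homogeneous_def by blast
qed

lemma vprod_vec:
  assumes x: "vec (FK K) x" and y: "vec (FK K) y"
  shows "vec (FK K) (vprod c n x y)"
proof -
  let ?L = "\<Union>i\<in>{i. x i \<noteq> 0}. \<Union>j\<in>{j. y j \<noteq> 0}. {l. wt l = nat (int (wt i) + int (wt j) - n - 1)}"
  have "{l. vprod c n x y l \<noteq> 0} \<subseteq> ?L"
  proof
    fix l assume "l \<in> {l. vprod c n x y l \<noteq> 0}"
    then have "vprod c n x y l \<noteq> 0" by simp
    then obtain i j where "x i \<noteq> 0" "y j \<noteq> 0" "c n i j l \<noteq> 0" by (rule vprod_nonzero_obtain)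
    then show "l \<in> ?L" using weight_of_consts by (intro UN_I[of i] UN_I[of j]) auto
  qed
  moreover have "finite ?L" using x y finite_weight_space unfolding Defs.vec_def by (intro finite_UN_I) auto
  ultimately have "finite {l. vprod c n x y l \<noteq> 0}" by (rule finite_subset)
  moreover have "x i * y j * c n i j l \<in> FK K" for i j l
  proof -
    have "x i \<in> FK K" "y j \<in> FK K" using x y unfolding Defs.vec_def by simp_all
    then show ?thesis using consts_FK subring_mult[OF is_subring_FK] by simp
  qed
  then have "vprod c n x y l \<in> FK K" for l
    unfolding vprod_def by (intro subring_sum[OF is_subring_FK] ballI)
  ultimately show ?thesis unfolding Defs.vec_def by simp
qed

lemma vprod_homogeneous:
  assumes "homogeneous wt x" "homogeneous wt y"
  shows "homogeneous wt (vprod c n x y)"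
proof -
  obtain a where a: "\<forall>l. x l \<noteq> 0 \<longrightarrow> wt l = a" using assms(1) unfolding homogeneous_def by blast
  obtain b where b: "\<forall>l. y l \<noteq> 0 \<longrightarrow> wt l = b" using assms(2) unfolding homogeneous_def by blast
  have "wt l = nat (int a + int b - n - 1)" if nz: "vprod c n x y l \<noteq> 0" for l
  proof -
    obtain i j where ij: "x i \<noteq> 0" "y j \<noteq> 0" "c n i j l \<noteq> 0"
      using nz by (rule vprod_nonzero_obtain)
    then have "wt i = a" "wt j = b" using a b by simp_all
    then show ?thesis using weight_of_consts[OF ij(3)] by simp
  qed
  then show ?thesis unfolding homogeneous_def by (intro exI[of _ "nat (int a + int b - n - 1)"]) blast
qed

lemma lim_map_vprod:
  assumes x: "vec (FK K) x" and y: "vec (FK K) y"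
  shows "lim_map (vprod c n x y) = vprod (lim_consts c) n (lim_map x) (lim_map y)"
proof
  fix l
  let ?X = "{i. x i \<noteq> 0}" and ?Y = "{j. y j \<noteq> 0}"
  have fin: "finite ?X" "finite ?Y" using x y unfolding Defs.vec_def by auto
  have supp: "{i. lim_map x i \<noteq> 0} \<subseteq> ?X" "{j. lim_map y j \<noteq> 0} \<subseteq> ?Y"
    using FK_zero unfolding lim_map_def by auto
  have summand: "x i * y j * c n i j l \<in> FK K \<and>
      lim_inf (x i * y j * c n i j l) = lim_map x i * lim_map y j * lim_consts c n i j l" for i j
  proof -
    have "x i \<in> FK K" "y j \<in> FK K" using x y unfolding Defs.vec_def by simp_all
    then show ?thesis
      using FK_mult[OF conjunct1[OF FK_mult] consts_FK] FK_mult unfolding lim_map_def lim_consts_def by simp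
  qed
  have inner: "(\<Sum>j\<in>?Y. x i * y j * c n i j l) \<in> FK K \<and>
      lim_inf (\<Sum>j\<in>?Y. x i * y j * c n i j l) = (\<Sum>j\<in>?Y. lim_map x i * lim_map y j * lim_consts c n i j l)"
    for i using FK_sum[OF fin(2), of "\<lambda>j. x i * y j * c n i j l" K] summand by simp
  have "lim_map (vprod c n x y) l = lim_inf (\<Sum>i\<in>?X. \<Sum>j\<in>?Y. x i * y j * c n i j l)"
    by (simp add: lim_map_def vprod_def)
  also have "\<dots> = (\<Sum>i\<in>?X. \<Sum>j\<in>?Y. lim_map x i * lim_map y j * lim_consts c n i j l)"
    using FK_sum[OF fin(1), of "\<lambda>i. \<Sum>j\<in>?Y. x i * y j * c n i j l" K] inner by simp
  also have "\<dots> = vprod (lim_consts c) n (lim_map x) (lim_map y) l"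
    by (rule vprod_eq_sum_over_supersets[symmetric]) (use fin supp in auto)
  finally show "lim_map (vprod c n x y) l = vprod (lim_consts c) n (lim_map x) (lim_map y) l" .
qed

lemma vderiv_power:
  assumes "vec (FK K) g" "homogeneous wt g"
  shows "vec (FK K) ((vderiv c vac ^^ k) g) \<and> homogeneous wt ((vderiv c vac ^^ k) g)
     \<and> lim_map ((vderiv c vac ^^ k) g) = (vderiv (lim_consts c) (lim_map vac) ^^ k) (lim_map g)"
proof (induction k)
  case (Suc k)
  then show ?case
    using vprod_vec[OF _ vac_vec] vprod_homogeneous[OF _ vac_homogeneous] lim_map_vprod[OF _ vac_vec]
    by (simp add: vderiv_def)
qed (use assms in simp)

lemma nomon_vec_homogeneous:
  assumes G: "\<forall>g\<in>G. vec (FK K) g \<and> homogeneous wt g" and m: "m \<in> nomon c vac G"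
  shows "vec (FK K) m \<and> homogeneous wt m"
  using m
proof (induction rule: nomon.induct)
  case (gen g k)
  then show ?case using G vderiv_power by blast
next
  case (prod g m k)
  then have "vec (FK K) ((vderiv c vac ^^ k) g)" "homogeneous wt ((vderiv c vac ^^ k) g)"
    using G vderiv_power by blast+
  with prod.IH show ?case using vprod_vec vprod_homogeneous by blast
qed

lemma nomon_lim_map:
  assumes G: "\<forall>g\<in>G. vec (FK K) g \<and> homogeneous wt g"
    and m: "m \<in> nomon (lim_consts c) (lim_map vac) (lim_map ` G)"
  shows "m \<in> lim_map ` nomon c vac G"
  using m
proof (induction rule: nomon.induct)
  case (gen g' k)
  then obtain g where g: "g \<in> G" "g' = lim_map g" by blast
  then have "(vderiv (lim_consts c) (lim_map vac) ^^ k) g' = lim_map ((vderiv c vac ^^ k) g)"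
    using G vderiv_power by simp
  then show ?case by (rule rev_image_eqI[OF nomon.gen[OF g(1)]])
next
  case (prod g' m k)
  then obtain g w where g: "g \<in> G" "g' = lim_map g" and w: "w \<in> nomon c vac G" "m = lim_map w"
    by blast
  have "vec (FK K) ((vderiv c vac ^^ k) g)"
    and "lim_map ((vderiv c vac ^^ k) g) = (vderiv (lim_consts c) (lim_map vac) ^^ k) g'"
    using g G vderiv_power by simp_all
  moreover have "vec (FK K) w" using nomon_vec_homogeneous[OF G w(1)] by simp
  ultimately have "vprod (lim_consts c) (-1) ((vderiv (lim_consts c) (lim_map vac) ^^ k) g') m
      = lim_map (vprod c (-1) ((vderiv c vac ^^ k) g) w)"
    using lim_map_vprod w(2) by simp
  then show ?case by (rule rev_image_eqI[OF nomon.prod[OF g(1) w(1)]])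
qed

text \<open>Projecting to the weight of l keeps the limit e_l, and makes the lifts of the basis
  vectors of one weight space a square system on that (finite) weight space.\<close>
lemma basis_vec_lift:
  assumes G: "\<forall>g\<in>G. vec (FK K) g \<and> homogeneous wt g"
    and gen: "strongly_generates UNIV (lim_consts c) (lim_map vac) (lim_map ` G)"
  shows "\<exists>u. u \<in> rspan (FK K) (insert vac (nomon c vac G)) \<and>
    (\<forall>l'. wt l' \<noteq> wt l \<longrightarrow> u l' = 0) \<and> lim_map u = basis_vec l"
proof -
  let ?W = "insert vac (nomon c vac G)"
  let ?M = "insert (lim_map vac) (nomon (lim_consts c) (lim_map vac) (lim_map ` G))"
  have W: "\<forall>w\<in>?W. vec (FK K) w \<and> homogeneous wt w"
    using vac_vec vac_homogeneous nomon_vec_homogeneous[OF G] by blast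
  then have Wv: "\<forall>w\<in>?W. vec (FK K) w" and Wh: "\<forall>w\<in>?W. homogeneous wt w" by simp_all
  have "{l'. basis_vec l l' \<noteq> (0::complex)} = {l}" unfolding basis_vec_def by auto
  then have "vec UNIV (basis_vec l :: 'b \<Rightarrow> complex)" unfolding Defs.vec_def by simp
  then have "basis_vec l \<in> rspan UNIV ?M" using gen unfolding strongly_generates_def by (metis mem_Collect_eq)
  moreover have "?M \<subseteq> lim_map ` ?W" using nomon_lim_map[OF G] by blast
  ultimately have "basis_vec l \<in> rspan UNIV (lim_map ` ?W)" using rspan_mono[OF subset_refl] by blast
  then obtain x where x: "x \<in> rspan (FK K) ?W" "lim_map x = basis_vec l"
    by (rule rspan_lim_map_lift[OF Wv])
  show ?thesis
  proof (intro exI conjI)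
    show "weight_proj wt (wt l) x \<in> rspan (FK K) ?W"
      by (rule rspan_weight_proj[OF is_subring_FK Wh x(1)])
    show "\<forall>l'. wt l' \<noteq> wt l \<longrightarrow> weight_proj wt (wt l) x l' = 0"
      unfolding weight_proj_def by simp
    show "lim_map (weight_proj wt (wt l) x) = basis_vec l"
      by (simp add: lim_map_weight_proj x(2) weight_proj_basis_vec)
  qed
qed

text \<open>Weight spaces are finite, so each needs finitely many new poles; there are countably
  many weights.\<close>
lemma basis_vecs_in_rspan_countable_extension:
  assumes K: "countable K"
    and lift: "\<And>l. \<exists>u. u \<in> rspan (FK K) W \<and> (\<forall>l'. wt l' \<noteq> wt l \<longrightarrow> u l' = 0) \<and> lim_map u = basis_vec l"
    and W: "\<forall>w\<in>W. vec (FK K) w"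
  obtains S where "K \<subseteq> S" "countable S" "\<forall>l. basis_vec l \<in> rspan (FK S) W"
proof -
  from lift have "\<forall>l. \<exists>u. u \<in> rspan (FK K) W \<and> (\<forall>l'. wt l' \<noteq> wt l \<longrightarrow> u l' = 0)
      \<and> lim_map u = basis_vec l" by blast
  then obtain U where U: "\<forall>l. U l \<in> rspan (FK K) W \<and> (\<forall>l'. wt l' \<noteq> wt l \<longrightarrow> U l l' = 0)
      \<and> lim_map (U l) = basis_vec l"
    by (rule choice[THEN exE])
  have "\<forall>m. \<exists>Z. finite Z \<and> (\<forall>l\<in>{l. wt l = m}. basis_vec l \<in> rspan (FK (K \<union> Z)) W)"
  proof
    fix m
    have lim: "lim_inf (U k l') = basis_vec k l'" for k l'
      using fun_cong[OF conjunct2[OF conjunct2[OF spec[OF U, of k]]], of l'] unfolding lim_map_def by simp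
    obtain Z where "finite Z" "\<forall>l\<in>{l. wt l = m}. basis_vec l \<in> rspan (FK (K \<union> Z)) W"
    proof (rule basis_vecs_from_near_identity[OF finite_weight_space])
      show "\<forall>k\<in>{l. wt l = m}. \<forall>l'\<in>{l. wt l = m}. U k l' \<in> FK K"
        using U rspan_vec[OF is_subring_FK W] unfolding Defs.vec_def by blast
      show "\<forall>k\<in>{l. wt l = m}. \<forall>l'. l' \<notin> {l. wt l = m} \<longrightarrow> U k l' = 0"
        using U by auto
    qed (use U lim in \<open>auto simp: basis_vec_def\<close>)
    then show "\<exists>Z. finite Z \<and> (\<forall>l\<in>{l. wt l = m}. basis_vec l \<in> rspan (FK (K \<union> Z)) W)" by blast
  qed
  then obtain Z where Z: "\<forall>m. finite (Z m) \<and> (\<forall>l\<in>{l. wt l = m}. basis_vec l \<in> rspan (FK (K \<union> Z m)) W)"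
    by (rule choice[THEN exE])
  define S where "S = K \<union> (\<Union>m. Z m)"
  have "K \<subseteq> S" unfolding S_def by blast
  moreover have "countable S" unfolding S_def using K Z by (simp add: countable_finite)
  moreover have "basis_vec l \<in> rspan (FK S) W" for l
  proof -
    have "FK (K \<union> Z (wt l)) \<subseteq> FK S" unfolding S_def by (intro FK_mono) blast
    then show ?thesis using Z rspan_mono[OF _ subset_refl] by blast
  qed
  ultimately show ?thesis using that by blast
qed

end

theorem mainTheorem8:
  fixes K :: "complex set"
    and c :: "int \<Rightarrow> 'b \<Rightarrow> 'b \<Rightarrow> 'b \<Rightarrow> ratfun" and vac :: "'b \<Rightarrow> ratfun" and wt :: "'b \<Rightarrow> nat"
    and I :: "'i set" and a :: "'i \<Rightarrow> 'b \<Rightarrow> ratfun"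
  assumes "countable K"
    and "deformable_family K c vac wt"
    and "\<forall>i\<in>I. vec (FK K) (a i) \<and> homogeneous wt (a i)"
    and "strongly_generates (UNIV :: complex set) (lim_consts c) (lim_map vac) (lim_map ` a ` I)"
  shows "\<exists>S. K \<subseteq> S \<and> countable S \<and> strongly_generates (FK S) c vac (a ` I)"
proof -
  interpret deformable K c vac wt by (rule deformable.intro) fact
  let ?W = "insert vac (nomon c vac (a ` I))"
  have G: "\<forall>g\<in>a ` I. vec (FK K) g \<and> homogeneous wt g" using assms(3) by blast
  have W: "\<forall>w\<in>?W. vec (FK K) w" using vac_vec nomon_vec_homogeneous[OF G] by blast
  obtain S where S: "K \<subseteq> S" "countable S" "\<forall>l. basis_vec l \<in> rspan (FK S) ?W"
    using basis_vecs_in_rspan_countable_extension[OF assms(1) basis_vec_lift[OF G assms(4)] W] by blast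
  have "\<forall>w\<in>?W. vec (FK S) w" using W vec_mono[OF FK_mono[OF S(1)]] by blast
  then have "strongly_generates (FK S) c vac (a ` I)"
    unfolding strongly_generates_def by (rule vec_set_eq_rspan[OF is_subring_FK _ S(3)])
  with S(1,2) show ?thesis by blast
qed

end
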